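(* For every integer $m\geq 3$ there exists a connected cubic graph $G$ of order $2n$ such that every edge of $G$ is contained in at least one $[n-1]$-matching of $G$ (so $\chi'_{[n-1]}(G)$ is finite) and $\chi'_{[n-1]}(G)\geq m$.
   Context: All graphs are finite, simple (no loops, no parallel edges), connected and cubic (3-regular). For a positive integer $k$, a $[k]$-matching of $G$ is a matching of $G$ with exactly $k$ edges. The excessive $[k]$-index $\chi'_{[k]}(G)$ is the minimum number of $[k]$-matchings of $G$ whose union is $E(G)$; if some edge of $G$ lies in no $[k]$-matching, one sets $\chi'_{[k]}(G)=\infty$. *)

theory Defs
  imports Main "HOL-Library.Extended_Nat"
begin

definition simple_graph :: "'a set \<Rightarrow> 'a set set \<Rightarrow> bool" where
  "simple_graph V E \<longleftrightarrow> finite V \<and>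
     (\<forall>e\<in>E. \<exists>u v. e = {u, v} \<and> u \<noteq> v \<and> u \<in> V \<and> v \<in> V)"

definition degree :: "'a set set \<Rightarrow> 'a \<Rightarrow> nat" where
  "degree E v = card {e\<in>E. v \<in> e}"

definition cubic :: "'a set \<Rightarrow> 'a set set \<Rightarrow> bool" where
  "cubic V E \<longleftrightarrow> (\<forall>v\<in>V. degree E v = 3)"

definition adj :: "'a set set \<Rightarrow> 'a \<Rightarrow> 'a \<Rightarrow> bool" where
  "adj E u v \<longleftrightarrow> {u, v} \<in> E"

definition connected_graph :: "'a set \<Rightarrow> 'a set set \<Rightarrow> bool" where
  "connected_graph V E \<longleftrightarrow> V \<noteq> {} \<and> (\<forall>u\<in>V. \<forall>v\<in>V. (adj E)\<^sup>*\<^sup>* u v)"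

definition matching :: "'a set set \<Rightarrow> 'a set set \<Rightarrow> bool" where
  "matching E M \<longleftrightarrow> M \<subseteq> E \<and> (\<forall>e\<in>M. \<forall>f\<in>M. e \<noteq> f \<longrightarrow> e \<inter> f = {})"

definition k_matching :: "'a set set \<Rightarrow> nat \<Rightarrow> 'a set set \<Rightarrow> bool" where
  "k_matching E k M \<longleftrightarrow> matching E M \<and> card M = k"

definition excessive_index :: "'a set set \<Rightarrow> nat \<Rightarrow> enat" where
  "excessive_index E k =
     (if \<forall>e\<in>E. \<exists>M. k_matching E k M \<and> e \<in> M
      then enat (LEAST t. \<exists>Ms. length Ms = t \<and> (\<forall>M\<in>set Ms. k_matching E k M)
                            \<and> \<Union>(set Ms) = E)
      else \<infinity>)"

end

(* The graph is a ring of s blocks of eight vertices. In each block a hub vertex is joined to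
   the two ports linking the block to its neighbours and, by a single edge, to a gadget of five
   vertices. A [4s-1]-matching misses exactly two of the 8s vertices. If it uses one of the two
   hub edges towards the ports of a block, it cannot use the edge into that block's gadget, so
   the gadget, having odd order, contains an uncovered vertex. Hence each [4s-1]-matching
   contains at most two of the 2s hub edges, and covering all edges needs at least s of them.
   Explicit blockwise involutions show that every edge lies in some [4s-1]-matching. *)

theory Submission
  imports Defs
begin

section \<open>Matchings and covers\<close>

lemma card_Union_matching:
  assumes "finite M" "\<forall>e\<in>M. card e = 2" "\<forall>e\<in>M. \<forall>f\<in>M. e \<noteq> f \<longrightarrow> e \<inter> f = {}"
  shows "card (\<Union>M) = 2 * card M"
proof -
  have "card (\<Union>M) = sum card M"
    using assms by (intro card_Union_disjoint) (auto simp: pairwise_def disjnt_def intro: card_ge_0_finite)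
  also have "\<dots> = sum (\<lambda>_. 2) M"
    using assms(2) by (intro sum.cong) auto
  finally show ?thesis
    by simp
qed

lemma odd_set_not_covered:
  assumes "finite M" "\<forall>e\<in>M. card e = 2" "\<forall>e\<in>M. \<forall>f\<in>M. e \<noteq> f \<longrightarrow> e \<inter> f = {}"
    and "odd (card L)" "\<forall>e\<in>M. e \<inter> L \<noteq> {} \<longrightarrow> e \<subseteq> L"
  shows "\<not> L \<subseteq> \<Union>M"
proof
  assume "L \<subseteq> \<Union>M"
  have "L \<subseteq> \<Union>{e\<in>M. e \<subseteq> L}"
  proof
    fix x assume "x \<in> L"
    with \<open>L \<subseteq> \<Union>M\<close> obtain e where "e \<in> M" "x \<in> e"
      by blast
    with \<open>x \<in> L\<close> assms(5) show "x \<in> \<Union>{e\<in>M. e \<subseteq> L}"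
      by blast
  qed
  then have "L = \<Union>{e\<in>M. e \<subseteq> L}"
    by blast
  then have "card L = 2 * card {e\<in>M. e \<subseteq> L}"
    using assms(1-3) card_Union_matching[of "{e\<in>M. e \<subseteq> L}"] by auto
  with assms(4) show False by simp
qed

lemma k_matching_containing:
  assumes "matching E M" "finite M" "e \<in> M" "1 \<le> k" "k \<le> card M"
  shows "\<exists>M'. k_matching E k M' \<and> e \<in> M'"
proof -
  have "k - 1 \<le> card (M - {e})"
    using assms by simp
  then obtain M0 where M0: "M0 \<subseteq> M - {e}" "card M0 = k - 1"
    by (meson obtain_subset_with_card_n)
  then have "finite M0" "e \<notin> M0"
    using assms(2) finite_subset by auto
  then have "card (insert e M0) = k"
    using M0(2) assms(4) by simp
  moreover have "matching E (insert e M0)"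
    using assms(1,3) M0(1) unfolding matching_def by blast
  ultimately show ?thesis
    unfolding k_matching_def by blast
qed

lemma k_matching_of_involution:
  assumes "finite D" and p: "\<And>w. w \<in> D \<Longrightarrow> p w \<in> D \<and> p (p w) = w \<and> p w \<noteq> w \<and> {w, p w} \<in> E"
    and "v \<in> D" "1 \<le> k" "2 * k \<le> card D"
  shows "\<exists>M. k_matching E k M \<and> {v, p v} \<in> M"
proof -
  let ?M = "(\<lambda>w. {w, p w}) ` D"
  have pair: "{x, p x} = {w, p w}" if "w \<in> D" "x \<in> {w, p w}" for w x
    using that p[OF \<open>w \<in> D\<close>] by (auto simp: insert_commute)
  have disjoint: "\<forall>e\<in>?M. \<forall>f\<in>?M. e \<noteq> f \<longrightarrow> e \<inter> f = {}"
  proof (intro ballI impI)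
    fix e f assume "e \<in> ?M" "f \<in> ?M" "e \<noteq> f"
    then obtain w w' where "w \<in> D" "e = {w, p w}" "w' \<in> D" "f = {w', p w'}"
      by blast
    with \<open>e \<noteq> f\<close> pair show "e \<inter> f = {}"
      by blast
  qed
  have "\<forall>e\<in>?M. card e = 2"
    using p by fastforce
  then have "card (\<Union>?M) = 2 * card ?M"
    using \<open>finite D\<close> disjoint by (simp add: card_Union_matching)
  moreover have "\<Union>?M = D"
    using p by auto
  ultimately have "k \<le> card ?M"
    using assms(5) by simp
  moreover have "matching E ?M"
    using disjoint p unfolding matching_def by blast
  moreover have "{v, p v} \<in> ?M"
    using \<open>v \<in> D\<close> by blast
  ultimately show ?thesis
    using k_matching_containing \<open>finite D\<close> assms(4) by blast
qed

lemma card_le_mult_length_if_covered: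
  assumes "H \<subseteq> \<Union>(set Ms)" "\<And>M. M \<in> set Ms \<Longrightarrow> card (M \<inter> H) \<le> c"
  shows "card H \<le> c * length Ms"
proof -
  have "H = (\<Union>M\<in>set Ms. M \<inter> H)"
    using assms(1) by blast
  then have "card H \<le> (\<Sum>M\<in>set Ms. card (M \<inter> H))"
    by (metis card_UN_le finite_set)
  also have "\<dots> \<le> card (set Ms) * c"
    using assms(2) by (metis sum_bounded_above of_nat_id)
  also have "\<dots> \<le> c * length Ms"
    by (simp add: card_length mult.commute)
  finally show ?thesis .
qed

lemma excessive_index_geI:
  assumes "finite E" and covered: "\<forall>e\<in>E. \<exists>M. k_matching E k M \<and> e \<in> M"
    and bound: "\<And>Ms. \<forall>M\<in>set Ms. k_matching E k M \<Longrightarrow> \<Union>(set Ms) = E \<Longrightarrow> t \<le> length Ms"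
  shows "enat t \<le> excessive_index E k"
proof -
  let ?cover = "\<lambda>n. \<exists>Ms. length Ms = n \<and> (\<forall>M\<in>set Ms. k_matching E k M) \<and> \<Union>(set Ms) = E"
  obtain choice where choice: "\<And>e. e \<in> E \<Longrightarrow> k_matching E k (choice e) \<and> e \<in> choice e"
    using bchoice[OF covered] by blast
  obtain es where "set es = E"
    using finite_list[OF \<open>finite E\<close>] by blast
  have "\<Union>(set (map choice es)) = E"
  proof
    have "choice e \<subseteq> E" if "e \<in> E" for e
      using choice[OF that] unfolding k_matching_def matching_def by blast
    then show "\<Union>(set (map choice es)) \<subseteq> E"
      using \<open>set es = E\<close> by auto
    show "E \<subseteq> \<Union>(set (map choice es))"
      using choice \<open>set es = E\<close> by force
  qed
  moreover have "\<forall>M\<in>set (map choice es). k_matching E k M"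
    using choice \<open>set es = E\<close> by auto
  ultimately have "?cover (length (map choice es))"
    by blast
  then have "?cover (Least ?cover)"
    by (rule LeastI)
  then obtain Ms where Ms: "length Ms = Least ?cover" "\<forall>M\<in>set Ms. k_matching E k M" "\<Union>(set Ms) = E"
    by blast
  have "t \<le> Least ?cover"
    using bound[OF Ms(2,3)] Ms(1) by simp
  then show ?thesis
    unfolding excessive_index_def using covered by simp
qed

section \<open>A ring of gadgets\<close>

definition node :: "nat \<Rightarrow> nat \<Rightarrow> nat" where
  "node i r = 8 * i + r"

lemma node_div [simp]: "r < 8 \<Longrightarrow> node i r div 8 = i"
  by (simp add: node_def)

lemma node_mod [simp]: "r < 8 \<Longrightarrow> node i r mod 8 = r"
  by (simp add: node_def)

lemma node_eq_iff [simp]: "r < 8 \<Longrightarrow> r' < 8 \<Longrightarrow> node i r = node j r' \<longleftrightarrow> i = j \<and> r = r'"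
  by (metis node_div node_mod)

lemma node_dvd_iff [simp]: "r < 8 \<Longrightarrow> 8 dvd node i r \<longleftrightarrow> r = 0"
  by (auto simp: node_def dvd_add_right_iff)

lemma node_less_iff [simp]: "r < 8 \<Longrightarrow> node i r < 8 * s \<longleftrightarrow> i < s"
  by (auto simp: node_def)

lemma node_div_mod: "node (v div 8) (v mod 8) = v"
  by (simp add: node_def)

lemma nodeE:
  assumes "v < 8 * s"
  obtains i r where "i < s" "r < 8" "v = node i r"
  using assms node_div_mod by (metis less_mult_imp_div_less mod_less_divisor mult.commute zero_less_numeral)

lemma less_8_cases: "(r::nat) < 8 \<Longrightarrow> r = 0 \<or> r = 1 \<or> r = 2 \<or> r = 3 \<or> r = 4 \<or> r = 5 \<or> r = 6 \<or> r = 7"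
  by arith

definition ring_succ :: "nat \<Rightarrow> nat \<Rightarrow> nat" where
  "ring_succ s i = (if Suc i = s then 0 else Suc i)"

definition ring_pred :: "nat \<Rightarrow> nat \<Rightarrow> nat" where
  "ring_pred s i = (if i = 0 then s - 1 else i - 1)"

lemma ring_succ_less [simp]: "i < s \<Longrightarrow> ring_succ s i < s"
  by (auto simp: ring_succ_def)

lemma ring_pred_less [simp]: "i < s \<Longrightarrow> ring_pred s i < s"
  by (auto simp: ring_pred_def)

lemma ring_succ_pred [simp]: "i < s \<Longrightarrow> ring_succ s (ring_pred s i) = i"
  by (auto simp: ring_succ_def ring_pred_def)

lemma ring_pred_succ [simp]: "i < s \<Longrightarrow> ring_pred s (ring_succ s i) = i"
  by (auto simp: ring_succ_def ring_pred_def)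

lemma ring_succ_neq: "i < s \<Longrightarrow> 2 \<le> s \<Longrightarrow> ring_succ s i \<noteq> i"
  by (auto simp: ring_succ_def)

lemma ring_pred_neq: "i < s \<Longrightarrow> 2 \<le> s \<Longrightarrow> ring_pred s i \<noteq> i"
  by (auto simp: ring_pred_def)

text \<open>Within a block, the hub 0 forms a triangle with the ports 6 and 7, and port 7 is joined
  to port 6 of the next block. The hub is also joined to 1; the gadget on 1, ..., 5 consists of
  K4 minus the edge 23 on 2, 3, 4, 5 together with the edges 12 and 13.\<close>

definition block_nbrs :: "nat \<Rightarrow> nat \<Rightarrow> nat \<Rightarrow> nat set" where
  "block_nbrs s i r =
    (if r = 0 then {node i 1, node i 6, node i 7}
     else if r = 1 then {node i 0, node i 2, node i 3}
     else if r = 2 then {node i 1, node i 4, node i 5}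
     else if r = 3 then {node i 1, node i 4, node i 5}
     else if r = 4 then {node i 2, node i 3, node i 5}
     else if r = 5 then {node i 2, node i 3, node i 4}
     else if r = 6 then {node i 0, node i 7, node (ring_pred s i) 7}
     else {node i 0, node i 6, node (ring_succ s i) 6})"

definition nbrs :: "nat \<Rightarrow> nat \<Rightarrow> nat set" where
  "nbrs s v = block_nbrs s (v div 8) (v mod 8)"

definition ring_edges :: "nat \<Rightarrow> nat set set" where
  "ring_edges s = {{v, u} | v u. v < 8 * s \<and> u \<in> nbrs s v}"

lemma nbrs_node [simp]: "r < 8 \<Longrightarrow> nbrs s (node i r) = block_nbrs s i r"
  by (simp add: nbrs_def)

lemma block_nbrs_sym:
  assumes "i < s" "r < 8" "u \<in> block_nbrs s i r"
  shows "u div 8 < s \<and> u mod 8 < 8 \<and> node i r \<in> block_nbrs s (u div 8) (u mod 8) \<and> u \<noteq> node i r"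
  using less_8_cases[OF assms(2)] assms by (elim disjE) (auto simp: block_nbrs_def)

lemma nbrs_sym:
  assumes "v < 8 * s" "u \<in> nbrs s v"
  shows "u < 8 * s \<and> v \<in> nbrs s u \<and> u \<noteq> v"
proof -
  obtain i r where i: "i < s" and r: "r < 8" and v: "v = node i r"
    using assms(1) by (rule nodeE)
  have "u \<in> block_nbrs s i r"
    using assms(2) r v by simp
  from block_nbrs_sym[OF i r this] have "u div 8 < s" "u mod 8 < 8" "v \<in> nbrs s u" "u \<noteq> v"
    by (simp_all add: nbrs_def v)
  then show ?thesis
    by (metis node_div_mod node_less_iff)
qed

lemma card_nbrs:
  assumes "v < 8 * s" "2 \<le> s"
  shows "card (nbrs s v) = 3"
proof -
  obtain i r where i: "i < s" and r: "r < 8" and v: "v = node i r"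
    using assms(1) by (rule nodeE)
  show ?thesis
    using less_8_cases[OF r] r ring_pred_neq[OF i assms(2)] ring_succ_neq[OF i assms(2)] unfolding v
    by (elim disjE) (auto simp: block_nbrs_def)
qed

lemma edge_in_ring_edges: "v < 8 * s \<Longrightarrow> u \<in> nbrs s v \<Longrightarrow> {v, u} \<in> ring_edges s"
  unfolding ring_edges_def by blast

lemma ring_edges_incident: "e \<in> ring_edges s \<Longrightarrow> v \<in> e \<Longrightarrow> v < 8 * s \<and> (\<exists>u\<in>nbrs s v. e = {v, u})"
  unfolding ring_edges_def using nbrs_sym by (auto simp: insert_commute)

lemma ring_edges_subset: "ring_edges s \<subseteq> Pow {..<8 * s}"
  unfolding ring_edges_def using nbrs_sym by auto

lemma finite_ring_edges: "finite (ring_edges s)"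
  using ring_edges_subset by (rule finite_subset) simp

lemma ring_edgeE:
  assumes "e \<in> ring_edges s"
  obtains v u where "e = {v, u}" "v < 8 * s" "u < 8 * s" "u \<noteq> v" "u \<in> nbrs s v"
  using assms nbrs_sym unfolding ring_edges_def by blast

lemma card_ring_edge: "e \<in> ring_edges s \<Longrightarrow> card e = 2"
  by (erule ring_edgeE) simp

lemma simple_graph_ring: "simple_graph {..<8 * s} (ring_edges s)"
  unfolding simple_graph_def by (auto elim!: ring_edgeE)

lemma degree_ring_edges:
  assumes "v < 8 * s" "2 \<le> s"
  shows "degree (ring_edges s) v = 3"
proof -
  have "{e \<in> ring_edges s. v \<in> e} = (\<lambda>u. {v, u}) ` nbrs s v"
    using ring_edges_incident[of _ s v] edge_in_ring_edges[OF assms(1)] by auto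
  moreover have "inj_on (\<lambda>u. {v, u}) (nbrs s v)"
    using nbrs_sym[OF assms(1)] by (auto simp: inj_on_def doubleton_eq_iff)
  ultimately show ?thesis
    unfolding degree_def using card_nbrs[OF assms] by (simp add: card_image)
qed

lemma cubic_ring: "2 \<le> s \<Longrightarrow> cubic {..<8 * s} (ring_edges s)"
  unfolding cubic_def using degree_ring_edges by simp

lemma symp_adj: "symp (adj E)"
  by (rule sympI) (simp add: adj_def insert_commute)

lemma adj_node: "i < s \<Longrightarrow> r < 8 \<Longrightarrow> u \<in> block_nbrs s i r \<Longrightarrow> adj (ring_edges s) (node i r) u"
  unfolding adj_def by (rule edge_in_ring_edges) simp_all

lemma hub_reaches_block:
  assumes "i < s" "r < 8"
  shows "(adj (ring_edges s))\<^sup>*\<^sup>* (node i 0) (node i r)"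
proof -
  let ?reach = "(adj (ring_edges s))\<^sup>*\<^sup>* (node i 0)"
  have step: "?reach (node i b)" if "?reach (node i a)" "a < 8" "node i b \<in> block_nbrs s i a" for a b
    using that adj_node[OF assms(1)] by (meson rtranclp.rtrancl_into_rtrancl)
  have 1: "?reach (node i 1)" and 6: "?reach (node i 6)" and 7: "?reach (node i 7)"
    by (rule step[OF rtranclp.rtrancl_refl]; simp add: block_nbrs_def)+
  have 2: "?reach (node i 2)" and 3: "?reach (node i 3)"
    by (rule step[OF 1]; simp add: block_nbrs_def)+
  have 4: "?reach (node i 4)" and 5: "?reach (node i 5)"
    by (rule step[OF 2]; simp add: block_nbrs_def)+
  show ?thesis
    using less_8_cases[OF assms(2)] 1 2 3 4 5 6 7 by auto
qed

lemma hub_reaches_hubs: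
  assumes "i < s"
  shows "(adj (ring_edges s))\<^sup>*\<^sup>* (node 0 0) (node i 0)"
  using assms
proof (induction i)
  case 0
  then show ?case by simp
next
  case (Suc i)
  then have "i < s" "ring_succ s i = Suc i"
    by (auto simp: ring_succ_def)
  let ?R = "adj (ring_edges s)"
  have "?R\<^sup>*\<^sup>* (node 0 0) (node i 7)"
    using Suc.IH[OF \<open>i < s\<close>] hub_reaches_block[OF \<open>i < s\<close>, of 7] by (rule rtranclp_trans) simp
  moreover have "?R (node i 7) (node (Suc i) 6)" "?R (node (Suc i) 6) (node (Suc i) 0)"
    using adj_node[of i s 7] adj_node[of "Suc i" s 6] Suc.prems \<open>i < s\<close> \<open>ring_succ s i = Suc i\<close>
    by (simp_all add: block_nbrs_def)
  ultimately show ?case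
    by (rule rtranclp.rtrancl_into_rtrancl[OF rtranclp.rtrancl_into_rtrancl])
qed

lemma connected_ring: "1 \<le> s \<Longrightarrow> connected_graph {..<8 * s} (ring_edges s)"
proof -
  assume "1 \<le> s"
  let ?R = "adj (ring_edges s)"
  have reach: "?R\<^sup>*\<^sup>* (node 0 0) v" if v: "v < 8 * s" for v
  proof -
    obtain i r where "i < s" "r < 8" "v = node i r"
      using v by (rule nodeE)
    then show ?thesis
      using hub_reaches_hubs[of i s] hub_reaches_block[of i s r] by (simp add: rtranclp_trans)
  qed
  have "?R\<^sup>*\<^sup>* u v" if "u < 8 * s" "v < 8 * s" for u v
  proof -
    have "?R\<^sup>*\<^sup>* u (node 0 0)"
      using sympD[OF symp_rtranclp[OF symp_adj] reach[OF that(1)]] .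
    then show ?thesis
      using reach[OF that(2)] by (rule rtranclp_trans)
  qed
  moreover have "0 \<in> {..<8 * s}"
    using \<open>1 \<le> s\<close> by simp
  ultimately show ?thesis
    unfolding connected_graph_def lessThan_iff by blast
qed

section \<open>Every edge lies in a [4s-1]-matching\<close>

lemma ring_k_matching_of_involution:
  assumes "1 \<le> s"
    and inv: "\<And>j t. j < s \<Longrightarrow> t < 8 \<Longrightarrow> ok j t \<Longrightarrow>
      g j t < s \<and> f j t < 8 \<and> ok (g j t) (f j t) \<and> g (g j t) (f j t) = j \<and> f (g j t) (f j t) = t
      \<and> node (g j t) (f j t) \<in> block_nbrs s j t"
    and few_missing: "\<And>j t. j < s \<Longrightarrow> t < 8 \<Longrightarrow> \<not> ok j t \<Longrightarrow> node j t \<in> {a, b}"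
    and "i < s" "r < 8" "ok i r"
  shows "\<exists>M. k_matching (ring_edges s) (4 * s - 1) M \<and> {node i r, node (g i r) (f i r)} \<in> M"
proof -
  define D where "D = {v. v < 8 * s \<and> ok (v div 8) (v mod 8)}"
  define p where "p v = node (g (v div 8) (v mod 8)) (f (v div 8) (v mod 8))" for v
  have involution: "p w \<in> D \<and> p (p w) = w \<and> p w \<noteq> w \<and> {w, p w} \<in> ring_edges s"
    if w: "w \<in> D" for w
  proof -
    obtain j t where "j < s" "t < 8" "w = node j t"
      using w unfolding D_def by (blast elim: nodeE)
    moreover have "ok j t"
      using w \<open>t < 8\<close> \<open>w = node j t\<close> unfolding D_def by simp
    ultimately have "p w \<in> D \<and> p (p w) = w \<and> p w \<in> nbrs s w" and "w < 8 * s"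
      using inv[of j t] unfolding D_def p_def by simp_all
    then show ?thesis
      using nbrs_sym edge_in_ring_edges by blast
  qed
  have "finite D"
    unfolding D_def by simp
  have "{..<8 * s} - {a, b} \<subseteq> D"
    unfolding D_def using few_missing by (force elim: nodeE)
  then have "card ({..<8 * s} - {a, b}) \<le> card D"
    using \<open>finite D\<close> by (rule card_mono[rotated])
  moreover have "card {..<8 * s} - card {a, b} \<le> card ({..<8 * s} - {a, b})"
    by (rule diff_card_le_card_Diff) simp
  moreover have "card {a, b} \<le> 2"
    by (rule card_insert_le_m1) auto
  ultimately have "2 * (4 * s - 1) \<le> card D"
    by simp
  moreover have "node i r \<in> D"
    unfolding D_def using assms(4-6) by simp
  ultimately have "\<exists>M. k_matching (ring_edges s) (4 * s - 1) M \<and> {node i r, p (node i r)} \<in> M"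
    using k_matching_of_involution[OF \<open>finite D\<close> involution] \<open>1 \<le> s\<close> by simp
  then show ?thesis
    unfolding p_def using \<open>r < 8\<close> by simp
qed

text \<open>Residue involutions, listed as the images of 0, ..., 7. Every block paired by
  pairing_A, or every block paired by pairing_B with port 7 of each block matched to port 6
  of the next, gives a perfect matching. Replacing pairing_A in one block by pairing_hub6
  (resp. pairing_hub7) gives a matching missing only the vertices 3 and 7 (resp. 2 and 6) of
  that block. These four kinds of matchings cover every edge.\<close>

definition pairing_A :: "nat list" where "pairing_A = [1, 0, 4, 5, 2, 3, 7, 6]"
definition pairing_B :: "nat list" where "pairing_B = [1, 0, 5, 4, 3, 2, 7, 6]"
definition pairing_hub6 :: "nat list" where "pairing_hub6 = [6, 2, 1, 3, 5, 4, 0, 7]"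
definition pairing_hub7 :: "nat list" where "pairing_hub7 = [7, 3, 2, 1, 5, 4, 6, 0]"

definition block_B :: "nat \<Rightarrow> nat \<Rightarrow> nat \<Rightarrow> nat" where
  "block_B s i r = (if r = 6 then ring_pred s i else if r = 7 then ring_succ s i else i)"

lemma pairing_A_in_block:
  assumes "t < 8"
  shows "pairing_A ! t < 8 \<and> pairing_A ! (pairing_A ! t) = t \<and> node i (pairing_A ! t) \<in> block_nbrs s i t"
  using less_8_cases[OF assms] by (elim disjE) (auto simp: pairing_A_def block_nbrs_def)

lemma pairing_hub6_in_block:
  assumes "t < 8" "t \<noteq> 3" "t \<noteq> 7"
  shows "pairing_hub6 ! t < 8 \<and> pairing_hub6 ! t \<noteq> 3 \<and> pairing_hub6 ! t \<noteq> 7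
    \<and> pairing_hub6 ! (pairing_hub6 ! t) = t \<and> node i (pairing_hub6 ! t) \<in> block_nbrs s i t"
  using less_8_cases[OF assms(1)] assms by (elim disjE) (auto simp: pairing_hub6_def block_nbrs_def)

lemma pairing_hub7_in_block:
  assumes "t < 8" "t \<noteq> 2" "t \<noteq> 6"
  shows "pairing_hub7 ! t < 8 \<and> pairing_hub7 ! t \<noteq> 2 \<and> pairing_hub7 ! t \<noteq> 6
    \<and> pairing_hub7 ! (pairing_hub7 ! t) = t \<and> node i (pairing_hub7 ! t) \<in> block_nbrs s i t"
  using less_8_cases[OF assms(1)] assms by (elim disjE) (auto simp: pairing_hub7_def block_nbrs_def)

lemma ring_k_matching_pairing_A:
  assumes "1 \<le> s" "i < s" "r < 8"
  shows "\<exists>M. k_matching (ring_edges s) (4 * s - 1) M \<and> {node i r, node i (pairing_A ! r)} \<in> M"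
  by (rule ring_k_matching_of_involution[where ok = "\<lambda>_ _. True"]) (use assms pairing_A_in_block in auto)

lemma ring_k_matching_pairing_B:
  assumes "1 \<le> s" "i < s" "r < 8"
  shows "\<exists>M. k_matching (ring_edges s) (4 * s - 1) M \<and> {node i r, node (block_B s i r) (pairing_B ! r)} \<in> M"
proof (rule ring_k_matching_of_involution[where ok = "\<lambda>_ _. True"], goal_cases)
  case (2 j t)
  then show ?case
    using less_8_cases[OF \<open>t < 8\<close>] by (elim disjE) (auto simp: block_B_def pairing_B_def block_nbrs_def)
qed (use assms in auto)

lemma ring_k_matching_special_block:
  assumes "1 \<le> s" "j < s" "r < 8" "r \<noteq> a" "r \<noteq> b"
    and P: "\<And>t. t < 8 \<Longrightarrow> t \<noteq> a \<Longrightarrow> t \<noteq> b \<Longrightarrow>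
      P ! t < 8 \<and> P ! t \<noteq> a \<and> P ! t \<noteq> b \<and> P ! (P ! t) = t \<and> node j (P ! t) \<in> block_nbrs s j t"
  shows "\<exists>M. k_matching (ring_edges s) (4 * s - 1) M \<and> {node j r, node j (P ! r)} \<in> M"
proof -
  let ?ok = "\<lambda>i t. \<not> (i = j \<and> (t = a \<or> t = b))"
  let ?f = "\<lambda>i t. if i = j then P ! t else pairing_A ! t"
  have "\<exists>M. k_matching (ring_edges s) (4 * s - 1) M \<and> {node j r, node j (?f j r)} \<in> M"
    by (rule ring_k_matching_of_involution[where ok = ?ok and a = "node j a" and b = "node j b"])
      (use assms pairing_A_in_block in \<open>auto split: if_splits\<close>)
  then show ?thesis
    by simp
qed

lemma ring_edge_in_k_matching:
  assumes "2 \<le> s" "e \<in> ring_edges s"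
  shows "\<exists>M. k_matching (ring_edges s) (4 * s - 1) M \<and> e \<in> M"
proof -
  obtain v u where "e = {v, u}" "v < 8 * s" "u \<in> nbrs s v"
    using assms(2) by (rule ring_edgeE)
  moreover obtain i r where i: "i < s" and r: "r < 8" and "v = node i r"
    using \<open>v < 8 * s\<close> by (rule nodeE)
  ultimately have e: "e = {node i r, u}" and u: "u \<in> block_nbrs s i r"
    by simp_all
  have "1 \<le> s"
    using assms(1) by simp
  note A = ring_k_matching_pairing_A[OF \<open>1 \<le> s\<close> i r]
  note B = ring_k_matching_pairing_B[OF \<open>1 \<le> s\<close> i r]
  note hub6 = ring_k_matching_special_block[OF \<open>1 \<le> s\<close> i r _ _ pairing_hub6_in_block]
  note hub7 = ring_k_matching_special_block[OF \<open>1 \<le> s\<close> i r _ _ pairing_hub7_in_block]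
  show ?thesis
    using less_8_cases[OF r] u A B hub6 hub7 unfolding e
    by (elim disjE) (auto simp: block_nbrs_def block_B_def pairing_A_def pairing_B_def pairing_hub6_def pairing_hub7_def)
qed

section \<open>Hub edges and the lower bound\<close>

definition hub_edges :: "nat \<Rightarrow> nat set set" where
  "hub_edges s = {{node i 0, node i t} | i t. i < s \<and> (t = 6 \<or> t = 7)}"

lemma hub_edges_subset: "hub_edges s \<subseteq> ring_edges s"
proof
  fix e assume "e \<in> hub_edges s"
  then obtain i t where "e = {node i 0, node i t}" "t = 6 \<or> t = 7" "i < s"
    unfolding hub_edges_def by blast
  then show "e \<in> ring_edges s"
    using edge_in_ring_edges[of "node i 0" s "node i t"] by (auto simp: block_nbrs_def)
qed

lemma card_hub_edges: "card (hub_edges s) = 2 * s"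
proof -
  have "hub_edges s = (\<lambda>(i, t). {node i 0, node i t}) ` ({..<s} \<times> {6, 7})"
    unfolding hub_edges_def by auto
  moreover have "inj_on (\<lambda>(i, t). {node i 0, node i t}) ({..<s} \<times> {6, 7})"
    by (auto simp: inj_on_def doubleton_eq_iff)
  ultimately show ?thesis
    by (simp add: card_image card_cartesian_product)
qed

lemma uncovered_in_block_of_hub_edge:
  assumes M: "matching (ring_edges s) M" and hub: "{node i 0, node i t} \<in> M" "t = 6 \<or> t = 7" "i < s"
  shows "\<exists>x\<in>{..<8 * s} - \<Union>M. x div 8 = i"
proof -
  define L where "L = {node i 1, node i 2, node i 3, node i 4, node i 5}"
  have M_sub: "M \<subseteq> ring_edges s" and disjoint: "\<forall>e\<in>M. \<forall>f\<in>M. e \<noteq> f \<longrightarrow> e \<inter> f = {}"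
    using M unfolding matching_def by auto
  have "{node i 0, node i 1} \<notin> M"
  proof
    assume "{node i 0, node i 1} \<in> M"
    moreover have "{node i 0, node i 1} \<noteq> {node i 0, node i t}"
      using hub(2) by (auto simp: doubleton_eq_iff)
    ultimately have "{node i 0, node i 1} \<inter> {node i 0, node i t} = {}"
      using bspec[OF bspec[OF disjoint] hub(1)] by meson
    then show False
      by simp
  qed
  have "\<forall>e\<in>M. e \<inter> L \<noteq> {} \<longrightarrow> e \<subseteq> L"
  proof (intro ballI impI)
    fix e assume "e \<in> M" "e \<inter> L \<noteq> {}"
    then obtain x where "x \<in> e" "x \<in> L"
      by blast
    then obtain c where c: "c \<in> {1, 2, 3, 4, 5}" "x = node i c"
      unfolding L_def by blast
    obtain u where u: "u \<in> nbrs s x" "e = {x, u}"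
      using ring_edges_incident \<open>e \<in> M\<close> M_sub \<open>x \<in> e\<close> by blast
    then have "u \<in> L \<or> (u = node i 0 \<and> c = 1)"
      using c unfolding L_def by (auto simp: block_nbrs_def)
    then show "e \<subseteq> L"
      using \<open>{node i 0, node i 1} \<notin> M\<close> \<open>e \<in> M\<close> u(2) c \<open>x \<in> L\<close> by (auto simp: insert_commute)
  qed
  moreover have "finite M"
    using M_sub finite_ring_edges by (rule finite_subset)
  moreover have "\<forall>e\<in>M. card e = 2"
    using M_sub card_ring_edge by blast
  moreover have "odd (card L)"
    unfolding L_def by simp
  ultimately have "\<not> L \<subseteq> \<Union>M"
    using odd_set_not_covered disjoint by blast
  then obtain c where "c \<in> {1, 2, 3, 4, 5}" "node i c \<notin> \<Union>M"
    unfolding L_def by blast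
  then show ?thesis
    using hub(3) by (intro bexI[of _ "node i c"]) auto
qed

lemma card_uncovered_by_k_matching:
  assumes "1 \<le> s" "k_matching (ring_edges s) (4 * s - 1) M"
  shows "card ({..<8 * s} - \<Union>M) = 2"
proof -
  have M_sub: "M \<subseteq> ring_edges s" and disjoint: "\<forall>e\<in>M. \<forall>f\<in>M. e \<noteq> f \<longrightarrow> e \<inter> f = {}"
    using assms(2) unfolding k_matching_def matching_def by auto
  have "finite M"
    using M_sub finite_ring_edges by (rule finite_subset)
  moreover have "\<forall>e\<in>M. card e = 2"
    using M_sub card_ring_edge by blast
  ultimately have "card (\<Union>M) = 8 * s - 2"
    using card_Union_matching[OF _ _ disjoint] assms unfolding k_matching_def by simp
  moreover have "\<Union>M \<subseteq> {..<8 * s}"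
    using M_sub ring_edges_subset by blast
  ultimately show ?thesis
    using assms(1) by (simp add: card_Diff_subset finite_subset)
qed

lemma card_matching_hub_edges_le:
  assumes "1 \<le> s" "k_matching (ring_edges s) (4 * s - 1) M"
  shows "card (M \<inter> hub_edges s) \<le> 2"
proof -
  have M: "matching (ring_edges s) M"
    using assms(2) unfolding k_matching_def by blast
  then have disjoint: "\<forall>e\<in>M. \<forall>f\<in>M. e \<noteq> f \<longrightarrow> e \<inter> f = {}"
    unfolding matching_def by blast
  define F where "F = {..<8 * s} - \<Union>M"
  have "card F = 2"
    unfolding F_def using card_uncovered_by_k_matching[OF assms] .
  let ?block = "\<lambda>e. Min e div 8"
  have block_hub: "?block {node i 0, node i t} = i" if "t < 8" for i t
    using that by (simp add: node_def)
  have "inj_on ?block (M \<inter> hub_edges s)"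
  proof (rule inj_onI)
    fix e f assume "e \<in> M \<inter> hub_edges s" "f \<in> M \<inter> hub_edges s" "?block e = ?block f"
    then obtain i t t' where "e = {node i 0, node i t}" "f = {node i 0, node i t'}" "t < 8" "t' < 8"
      unfolding hub_edges_def using block_hub by auto
    then have "e \<inter> f \<noteq> {}"
      by auto
    with disjoint \<open>e \<in> M \<inter> hub_edges s\<close> \<open>f \<in> M \<inter> hub_edges s\<close> show "e = f"
      by blast
  qed
  moreover have "?block ` (M \<inter> hub_edges s) \<subseteq> (\<lambda>x. x div 8) ` F"
  proof
    fix b assume "b \<in> ?block ` (M \<inter> hub_edges s)"
    then obtain i t where "{node i 0, node i t} \<in> M" "t = 6 \<or> t = 7" "i < s" "b = i"
      unfolding hub_edges_def using block_hub by auto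
    then show "b \<in> (\<lambda>x. x div 8) ` F"
      using uncovered_in_block_of_hub_edge[OF M] unfolding F_def by blast
  qed
  ultimately have "card (M \<inter> hub_edges s) \<le> card ((\<lambda>x. x div 8) ` F)"
    by (rule card_inj_on_le) (simp add: F_def)
  also have "\<dots> \<le> card F"
    unfolding F_def by (rule card_image_le) simp
  finally show ?thesis
    using \<open>card F = 2\<close> by simp
qed

theorem proposition2:
  fixes m :: nat
  assumes "m \<ge> 3"
  shows "\<exists>(V :: nat set) E n. simple_graph V E \<and> connected_graph V E \<and> cubic V E
            \<and> card V = 2 * n
            \<and> (\<forall>e\<in>E. \<exists>M. k_matching E (n - 1) M \<and> e \<in> M)
            \<and> excessive_index E (n - 1) \<ge> enat m"
proof -
  have "1 \<le> m" "2 \<le> m"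
    using assms by simp_all
  have covered: "\<forall>e\<in>ring_edges m. \<exists>M. k_matching (ring_edges m) (4 * m - 1) M \<and> e \<in> M"
    using ring_edge_in_k_matching[OF \<open>2 \<le> m\<close>] by blast
  have "enat m \<le> excessive_index (ring_edges m) (4 * m - 1)"
  proof (rule excessive_index_geI[OF finite_ring_edges covered])
    fix Ms assume "\<forall>M\<in>set Ms. k_matching (ring_edges m) (4 * m - 1) M" "\<Union>(set Ms) = ring_edges m"
    then have "card (hub_edges m) \<le> 2 * length Ms"
      using card_le_mult_length_if_covered hub_edges_subset card_matching_hub_edges_le[OF \<open>1 \<le> m\<close>]
      by metis
    then show "m \<le> length Ms"
      by (simp add: card_hub_edges)
  qed
  then show ?thesis
    using simple_graph_ring connected_ring[OF \<open>1 \<le> m\<close>] cubic_ring[OF \<open>2 \<le> m\<close>] covered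
    by (intro exI[of _ "{..<8 * m}"] exI[of _ "ring_edges m"] exI[of _ "4 * m"]) simp
qed

end
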